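(* Let $(u,m)$ be a pair of smooth (classical) solutions to the system \[ \begin{cases} u_t + \frac{\sigma^2}{2} u_{xx} - ru + G(u_x,m)^2 = 0, & 0<t<T,\ 0<x<L,\\ m_t - \frac{\sigma^2}{2} m_{xx} - \{G(u_x,m)m\}_x = 0, & 0<t<T,\ 0<x<L,\\ m(0,x)=m_0(x),\quad u(T,x)=u_T(x), & 0\le x\le L,\\ u_x(t,0)=u_x(t,L)=0, & 0\le t\le T,\\ \frac{\sigma^2}{2} m_x(t,x) + G(u_x,m)m(t,x) = 0, & 0\le t\le T,\ x\in\{0,L\}, \end{cases} \] where $G(u_x,m)(t,x) := \frac12\left(b + c\int_0^L u_x(t,y)m(t,y)\,dy - u_x(t,x)\right)$. Then \[ \|u\|_\infty + \|u_x\|_\infty \le C, \] where the constant $C>0$ does not depend on $\sigma$. In particular, for all $t\in[0,T]$, \[ \left|\int_0^L u_x(t,x)m(t,x)\,dx\right| \le C, \] with $C>0$ independent of $\sigma$.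
   Context: Standing setting: $L,T,\sigma,r>0$ are constants, $\epsilon>0$, and $b=\frac{2}{2+\epsilon}$, $c=\frac{\epsilon}{2+\epsilon}$. The data satisfy: $u_T,m_0\in C^{2+\gamma}([0,L])$ for some $\gamma>0$; $u_T'(0)=u_T'(L)=0$ and $m_0(0)=m_0'(0)=m_0(L)=m_0'(L)=0$; $m_0$ is a probability density on $[0,L]$; $u_T\ge 0$. Constants may depend on $u_T,m_0,L,T,r,\epsilon$ but (as stated) not on $\sigma$. $\|\cdot\|_\infty$ is the sup norm on $[0,T]\times[0,L]$. *)

theory Defs
  imports "HOL-Analysis.Analysis"
begin

definition C2_holder :: "real \<Rightarrow> real \<Rightarrow> (real \<Rightarrow> real) \<Rightarrow> (real \<Rightarrow> real) \<Rightarrow> (real \<Rightarrow> real) \<Rightarrow> bool" where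
  "C2_holder \<gamma> L f f' f'' \<longleftrightarrow>
     (\<forall>x\<in>{0..L}. (f has_real_derivative f' x) (at x within {0..L})) \<and>
     (\<forall>x\<in>{0..L}. (f' has_real_derivative f'' x) (at x within {0..L})) \<and>
     (\<exists>K. \<forall>x\<in>{0..L}. \<forall>y\<in>{0..L}. \<bar>f'' x - f'' y\<bar> \<le> K * \<bar>x - y\<bar> powr \<gamma>)"

definition G :: "real \<Rightarrow> real \<Rightarrow> real \<Rightarrow> (real \<Rightarrow> real \<Rightarrow> real) \<Rightarrow> (real \<Rightarrow> real \<Rightarrow> real) \<Rightarrow> real \<Rightarrow> real \<Rightarrow> real" where
  "G b c L ux m t x = (1/2) * (b + c * integral {0..L} (\<lambda>y. ux t y * m t y) - ux t x)"

definition classical_solution :: "real \<Rightarrow> real \<Rightarrow> real \<Rightarrow> real \<Rightarrow> real \<Rightarrow> (real \<Rightarrow> real) \<Rightarrow> (real \<Rightarrow> real) \<Rightarrow> (real \<Rightarrow> real \<Rightarrow> real) \<Rightarrow> (real \<Rightarrow> real \<Rightarrow> real) \<Rightarrow> (real \<Rightarrow> real \<Rightarrow> real) \<Rightarrow> (real \<Rightarrow> real \<Rightarrow> real) \<Rightarrow> (real \<Rightarrow> real \<Rightarrow> real) \<Rightarrow> (real \<Rightarrow> real \<Rightarrow> real) \<Rightarrow> (real \<Rightarrow> real \<Rightarrow> real) \<Rightarrow> (real \<Rightarrow> real \<Rightarrow> real) \<Rightarrow> bool" where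
  "classical_solution \<sigma> r \<epsilon> L T uT m0 u ut ux uxx m mt mx mxx \<longleftrightarrow>
    (let b = 2 / (2 + \<epsilon>); c = \<epsilon> / (2 + \<epsilon>); R = {0..T} \<times> {0..L} in
     continuous_on R (\<lambda>(t,x). u t x) \<and> continuous_on R (\<lambda>(t,x). ut t x) \<and>
     continuous_on R (\<lambda>(t,x). ux t x) \<and> continuous_on R (\<lambda>(t,x). uxx t x) \<and>
     continuous_on R (\<lambda>(t,x). m t x) \<and> continuous_on R (\<lambda>(t,x). mt t x) \<and>
     continuous_on R (\<lambda>(t,x). mx t x) \<and> continuous_on R (\<lambda>(t,x). mxx t x) \<and>
     (\<forall>t\<in>{0..T}. \<forall>x\<in>{0..L}.
        ((\<lambda>s. u s x) has_real_derivative ut t x) (at t within {0..T}) \<and>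
        ((\<lambda>y. u t y) has_real_derivative ux t x) (at x within {0..L}) \<and>
        ((\<lambda>y. ux t y) has_real_derivative uxx t x) (at x within {0..L}) \<and>
        ((\<lambda>s. m s x) has_real_derivative mt t x) (at t within {0..T}) \<and>
        ((\<lambda>y. m t y) has_real_derivative mx t x) (at x within {0..L}) \<and>
        ((\<lambda>y. mx t y) has_real_derivative mxx t x) (at x within {0..L})) \<and>
     (\<forall>t\<in>{0<..<T}. \<forall>x\<in>{0<..<L}.
        ut t x + \<sigma>\<^sup>2 / 2 * uxx t x - r * u t x + (G b c L ux m t x)\<^sup>2 = 0 \<and>
        mt t x - \<sigma>\<^sup>2 / 2 * mxx t x - deriv (\<lambda>y. G b c L ux m t y * m t y) x = 0) \<and>
     (\<forall>x\<in>{0..L}. m 0 x = m0 x \<and> u T x = uT x) \<and>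
     (\<forall>t\<in>{0..T}. ux t 0 = 0 \<and> ux t L = 0) \<and>
     (\<forall>t\<in>{0..T}. \<forall>x\<in>{0, L}. \<sigma>\<^sup>2 / 2 * mx t x + G b c L ux m t x * m t x = 0))"

end

(* All estimates are maximum principles, and none of them involves sigma.
   Positivity of m and conservation of its mass give |int u_x m| <= sup |u_x|.
   The gradient bound applies the maximum principle not to u_x, which would need third
   derivatives, but to the increments u(t, x + h) - u(t, x): they are at most h sup |u_T'| at
   t = T and o(h) at the boundary, thanks to the Neumann condition.  Once u_x, hence G, is
   bounded, the maximum principle for the HJB equation puts u between 0 and
   max (sup u_T) (sup G^2 / r). *)

theory Submission
  imports Defs
begin

lemma real_mvt_within:
  fixes f f' :: "real \<Rightarrow> real"
  assumes "y < z" "{y..z} \<subseteq> S"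
    and "\<And>\<xi>. \<xi> \<in> {y..z} \<Longrightarrow> (f has_real_derivative f' \<xi>) (at \<xi> within S)"
  obtains \<xi> where "\<xi> \<in> {y<..<z}" "f z - f y = f' \<xi> * (z - y)"
proof -
  have "\<exists>\<xi>\<in>{y<..<z}. f z - f y = (*) (f' \<xi>) (z - y)"
  proof (rule mvt_simple)
    fix \<xi> assume "y \<le> \<xi>" "\<xi> \<le> z"
    with assms(2,3) show "(f has_derivative (*) (f' \<xi>)) (at \<xi> within {y..z})"
      unfolding has_field_derivative_def[symmetric] by (auto intro: DERIV_subset)
  qed (use assms(1) in auto)
  then show ?thesis using that by auto
qed

lemma has_real_derivative_shift_within:
  fixes f :: "real \<Rightarrow> real"
  assumes "(f has_real_derivative D) (at (y + h) within S)" "(\<lambda>z. z + h) ` S' \<subseteq> S"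
  shows "((\<lambda>z. f (z + h)) has_real_derivative D) (at y within S')"
proof -
  have "(f has_real_derivative D) (at ((\<lambda>z. z + h) y) within ((\<lambda>z. z + h) ` S'))"
    using DERIV_subset[OF assms] by simp
  moreover have "((\<lambda>z. z + h) has_real_derivative 1) (at y within S')"
    by (auto intro!: derivative_eq_intros)
  ultimately show ?thesis using DERIV_image_chain by (fastforce simp: o_def)
qed

definition increment :: "real \<Rightarrow> (real \<Rightarrow> real \<Rightarrow> real) \<Rightarrow> real \<Rightarrow> real \<Rightarrow> real" where
  "increment h f t y = f t (y + h) - f t y"

lemma increment_deriv_x:
  assumes "0 < h" "y \<in> {a..b - h}"
    and "\<And>x. x \<in> {a..b} \<Longrightarrow> ((\<lambda>x. f t x) has_real_derivative f' t x) (at x within {a..b})"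
  shows "((\<lambda>y. increment h f t y) has_real_derivative increment h f' t y) (at y within {a..b - h})"
proof -
  have "(\<lambda>z. z + h) ` {a..b - h} \<subseteq> {a..b}" "{a..b - h} \<subseteq> {a..b}" "y + h \<in> {a..b}" "y \<in> {a..b}"
    using assms(1,2) by auto
  then show ?thesis
    unfolding increment_def
    by (intro DERIV_diff has_real_derivative_shift_within[OF assms(3)] DERIV_subset[OF assms(3)])
qed

lemma max_right_deriv_nonpos:
  fixes f :: "real \<Rightarrow> real"
  assumes "(f has_real_derivative D) (at x within {a..b})" "x \<in> {a..<b}"
    and "\<And>y. y \<in> {a..b} \<Longrightarrow> f y \<le> f x"
  shows "D \<le> 0"
proof (rule ccontr)
  assume "\<not> D \<le> 0"
  then obtain d where d: "d > 0" "\<And>h. h > 0 \<Longrightarrow> x + h \<in> {a..b} \<Longrightarrow> h < d \<Longrightarrow> f x < f (x + h)"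
    using has_real_derivative_pos_inc_right[OF assms(1)] by force
  define h where "h = min d (b - x) / 2"
  have "h > 0" "h < d" "x + h \<in> {a..b}"
    using d(1) assms(2) by (auto simp: h_def min_def field_simps)
  then show False using d(2)[of h] assms(3)[of "x + h"] by auto
qed

lemma max_left_deriv_nonneg:
  fixes f :: "real \<Rightarrow> real"
  assumes "(f has_real_derivative D) (at x within {a..b})" "x \<in> {a<..b}"
    and "\<And>y. y \<in> {a..b} \<Longrightarrow> f y \<le> f x"
  shows "D \<ge> 0"
proof (rule ccontr)
  assume "\<not> D \<ge> 0"
  then obtain d where d: "d > 0" "\<And>h. h > 0 \<Longrightarrow> x - h \<in> {a..b} \<Longrightarrow> h < d \<Longrightarrow> f x < f (x - h)"
    using has_real_derivative_neg_dec_left[OF assms(1)] by force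
  define h where "h = min d (x - a) / 2"
  have "h > 0" "h < d" "x - h \<in> {a..b}"
    using d(1) assms(2) by (auto simp: h_def min_def field_simps)
  then show False using d(2)[of h] assms(3)[of "x - h"] by auto
qed

lemma min_right_deriv_nonneg:
  fixes f :: "real \<Rightarrow> real"
  assumes "(f has_real_derivative D) (at x within {a..b})" "x \<in> {a..<b}"
    and "\<And>y. y \<in> {a..b} \<Longrightarrow> f x \<le> f y"
  shows "D \<ge> 0"
  using max_right_deriv_nonpos[of "\<lambda>y. - f y" "- D" x a b] assms DERIV_minus by fastforce

lemma min_left_deriv_nonpos:
  fixes f :: "real \<Rightarrow> real"
  assumes "(f has_real_derivative D) (at x within {a..b})" "x \<in> {a<..b}"
    and "\<And>y. y \<in> {a..b} \<Longrightarrow> f x \<le> f y"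
  shows "D \<le> 0"
  using max_left_deriv_nonneg[of "\<lambda>y. - f y" "- D" x a b] assms DERIV_minus by fastforce

lemma max_second_deriv_nonpos:
  fixes f f' :: "real \<Rightarrow> real"
  assumes "a < b"
    and f': "\<And>y. y \<in> {a..b} \<Longrightarrow> (f has_real_derivative f' y) (at y within {a..b})"
    and f'': "(f' has_real_derivative D) (at x within {a..b})"
    and x: "x \<in> {a..b}" "f' x = 0"
    and max: "\<And>y. y \<in> {a..b} \<Longrightarrow> f y \<le> f x"
  shows "D \<le> 0"
proof (rule ccontr)
  assume "\<not> D \<le> 0"
  then have D: "D > 0" by simp
  show False
  proof (cases "x < b")
    case True
    then obtain d where d: "d > 0" "\<And>h. h > 0 \<Longrightarrow> x + h \<in> {a..b} \<Longrightarrow> h < d \<Longrightarrow> f' x < f' (x + h)"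
      using has_real_derivative_pos_inc_right[OF f'' D] by force
    define h where "h = min d (b - x) / 2"
    have h: "h > 0" "h < d" "x + h \<le> b" using d(1) True by (auto simp: h_def min_def field_simps)
    obtain \<xi> where \<xi>: "\<xi> \<in> {x<..<x + h}" "f (x + h) - f x = f' \<xi> * (x + h - x)"
      by (rule real_mvt_within[of x "x + h" "{a..b}" f f']) (use x h f' in auto)
    have "f' \<xi> > 0" using d(2)[of "\<xi> - x"] \<xi>(1) x h by auto
    then have "f' \<xi> * h > 0" using h by simp
    then show False using \<xi>(2) max[of "x + h"] x h by auto
  next
    case False
    with x have "x > a" using \<open>a < b\<close> by auto
    then obtain d where d: "d > 0" "\<And>h. h > 0 \<Longrightarrow> x - h \<in> {a..b} \<Longrightarrow> h < d \<Longrightarrow> f' (x - h) < f' x"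
      using has_real_derivative_pos_inc_left[OF f'' D] by force
    define h where "h = min d (x - a) / 2"
    have h: "h > 0" "h < d" "x - h \<ge> a" using d(1) \<open>x > a\<close> by (auto simp: h_def min_def field_simps)
    obtain \<xi> where \<xi>: "\<xi> \<in> {x - h<..<x}" "f x - f (x - h) = f' \<xi> * (x - (x - h))"
      by (rule real_mvt_within[of "x - h" x "{a..b}" f f']) (use x h f' in auto)
    have "f' \<xi> < 0" using d(2)[of "x - \<xi>"] \<xi>(1) x h by auto
    then have "f' \<xi> * h < 0" using h by (simp add: mult_neg_pos)
    then show False using \<xi>(2) max[of "x - h"] x h by auto
  qed
qed

lemma min_second_deriv_nonneg:
  fixes f f' :: "real \<Rightarrow> real"
  assumes "a < b"
    and "\<And>y. y \<in> {a..b} \<Longrightarrow> (f has_real_derivative f' y) (at y within {a..b})"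
    and "(f' has_real_derivative D) (at x within {a..b})"
    and "x \<in> {a..b}" "f' x = 0"
    and "\<And>y. y \<in> {a..b} \<Longrightarrow> f x \<le> f y"
  shows "D \<ge> 0"
  using max_second_deriv_nonpos[of a b "\<lambda>y. - f y" "\<lambda>y. - f' y" "- D" x] assms DERIV_minus
  by fastforce

lemma continuous_on_rectangle_attains_sup:
  fixes w :: "real \<Rightarrow> real \<Rightarrow> real"
  assumes "a \<le> b" "c \<le> d" "continuous_on ({a..b} \<times> {c..d}) (\<lambda>(t, x). w t x)"
  obtains t0 x0 where "t0 \<in> {a..b}" "x0 \<in> {c..d}"
    "\<And>t x. t \<in> {a..b} \<Longrightarrow> x \<in> {c..d} \<Longrightarrow> w t x \<le> w t0 x0"
proof -
  have "\<exists>p\<in>{a..b} \<times> {c..d}. \<forall>q\<in>{a..b} \<times> {c..d}. (\<lambda>(t, x). w t x) q \<le> (\<lambda>(t, x). w t x) p"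
    by (rule continuous_attains_sup) (use assms in \<open>auto intro: compact_Times\<close>)
  then show ?thesis using that by fastforce
qed

lemma continuous_on_rectangle_zero:
  fixes F :: "real \<Rightarrow> real \<Rightarrow> real"
  assumes "a < b" "c < d"
    and "continuous_on ({a..b} \<times> {c..d}) (\<lambda>(t, x). F t x)"
    and "\<And>t x. t \<in> {a<..<b} \<Longrightarrow> x \<in> {c<..<d} \<Longrightarrow> F t x = 0"
    and "t \<in> {a..b}" "x \<in> {c..d}"
  shows "F t x = 0"
proof -
  have "closure ({a<..<b} \<times> {c<..<d}) = {a..b} \<times> {c..d}"
    using assms(1,2) by (simp add: closure_Times)
  then have "(\<lambda>(t, x). F t x) (t, x) = 0"
    using continuous_constant_on_closure[of "{a<..<b} \<times> {c<..<d}" "\<lambda>(t, x). F t x" 0] assms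
    by auto
  then show ?thesis by simp
qed

lemma bounded_on_rectangle:
  fixes F :: "real \<Rightarrow> real \<Rightarrow> real"
  assumes "continuous_on ({a..b} \<times> {c..d}) (\<lambda>(t, x). F t x)"
  obtains B where "\<And>t x. t \<in> {a..b} \<Longrightarrow> x \<in> {c..d} \<Longrightarrow> \<bar>F t x\<bar> \<le> B"
proof -
  obtain B where "\<And>p. p \<in> {a..b} \<times> {c..d} \<Longrightarrow> norm ((\<lambda>(t, x). F t x) p) \<le> B"
    using continuous_on_compact_bound[OF _ assms] compact_Times[OF compact_Icc compact_Icc] by metis
  then show ?thesis using that by fastforce
qed

lemma continuous_on_slice:
  fixes F :: "real \<Rightarrow> real \<Rightarrow> real"
  assumes "continuous_on ({a..b} \<times> {c..d}) (\<lambda>(t, x). F t x)" "t \<in> {a..b}"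
  shows "continuous_on {c..d} (F t)"
proof -
  have "continuous_on {c..d} (\<lambda>x. (\<lambda>(t, x). F t x) (t, x))"
    by (rule continuous_on_compose2[OF assms(1)]) (use assms(2) in \<open>auto intro!: continuous_intros\<close>)
  then show ?thesis by simp
qed

lemma backward_max_principle:
  fixes w wt wx wxx :: "real \<Rightarrow> real \<Rightarrow> real"
  assumes "a < b" "0 < T" "0 \<le> s" "0 < r"
    and cont: "continuous_on ({0..T} \<times> {a..b}) (\<lambda>(t, x). w t x)"
    and wt: "\<And>t x. t \<in> {0..T} \<Longrightarrow> x \<in> {a..b} \<Longrightarrow> ((\<lambda>t. w t x) has_real_derivative wt t x) (at t within {0..T})"
    and wx: "\<And>t x. t \<in> {0..T} \<Longrightarrow> x \<in> {a..b} \<Longrightarrow> ((\<lambda>x. w t x) has_real_derivative wx t x) (at x within {a..b})"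
    and wxx: "\<And>t x. t \<in> {0..T} \<Longrightarrow> x \<in> {a..b} \<Longrightarrow> ((\<lambda>x. wx t x) has_real_derivative wxx t x) (at x within {a..b})"
    and terminal: "\<And>x. x \<in> {a..b} \<Longrightarrow> w T x \<le> B"
    and boundary: "\<And>t x. t \<in> {0..<T} \<Longrightarrow> x \<in> {a, b} \<Longrightarrow> wx t x = 0 \<or> w t x \<le> B"
    and supersol: "\<And>t x. t \<in> {0..<T} \<Longrightarrow> x \<in> {a..b} \<Longrightarrow> wx t x = 0 \<Longrightarrow>
      r * w t x \<le> wt t x + s * wxx t x + r * B"
    and tx: "t \<in> {0..T}" "x \<in> {a..b}"
  shows "w t x \<le> B"
proof (rule ccontr)
  assume "\<not> w t x \<le> B"
  obtain t0 x0 where p0: "t0 \<in> {0..T}" "x0 \<in> {a..b}"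
    and max: "\<And>t x. t \<in> {0..T} \<Longrightarrow> x \<in> {a..b} \<Longrightarrow> w t x \<le> w t0 x0"
    by (rule continuous_on_rectangle_attains_sup[OF _ _ cont]) (use assms(1,2) in auto)
  have above: "w t0 x0 > B" using max[OF tx] \<open>\<not> w t x \<le> B\<close> by linarith
  then have t0: "t0 \<in> {0..<T}" using terminal[OF p0(2)] p0(1) by (cases "t0 = T") auto
  have wx0: "wx t0 x0 = 0"
  proof (cases "x0 \<in> {a, b}")
    case True
    then show ?thesis using boundary[OF t0 True] above by auto
  next
    case False
    then have "x0 \<in> {a..<b}" "x0 \<in> {a<..b}" using p0(2) by auto
    then show ?thesis
      using max_right_deriv_nonpos[OF wx[OF p0]] max_left_deriv_nonneg[OF wx[OF p0]] max[OF p0(1)]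
      by fastforce
  qed
  have "wt t0 x0 \<le> 0"
    using max_right_deriv_nonpos[OF wt[OF p0]] t0 max[OF _ p0(2)] by auto
  moreover have "wxx t0 x0 \<le> 0"
    by (rule max_second_deriv_nonpos[OF \<open>a < b\<close> wx[OF p0(1)] wxx[OF p0] p0(2) wx0])
      (use max[OF p0(1)] in auto)
  ultimately have "r * w t0 x0 \<le> r * B"
    using supersol[OF t0 p0(2) wx0] \<open>0 \<le> s\<close> by (smt (verit) mult_nonneg_nonpos)
  then show False using above \<open>0 < r\<close> by simp
qed

lemma backward_min_principle:
  fixes w wt wx wxx :: "real \<Rightarrow> real \<Rightarrow> real"
  assumes "a < b" "0 < T" "0 \<le> s" "0 < r"
    and cont: "continuous_on ({0..T} \<times> {a..b}) (\<lambda>(t, x). w t x)"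
    and wt: "\<And>t x. t \<in> {0..T} \<Longrightarrow> x \<in> {a..b} \<Longrightarrow> ((\<lambda>t. w t x) has_real_derivative wt t x) (at t within {0..T})"
    and wx: "\<And>t x. t \<in> {0..T} \<Longrightarrow> x \<in> {a..b} \<Longrightarrow> ((\<lambda>x. w t x) has_real_derivative wx t x) (at x within {a..b})"
    and wxx: "\<And>t x. t \<in> {0..T} \<Longrightarrow> x \<in> {a..b} \<Longrightarrow> ((\<lambda>x. wx t x) has_real_derivative wxx t x) (at x within {a..b})"
    and terminal: "\<And>x. x \<in> {a..b} \<Longrightarrow> w T x \<ge> B"
    and boundary: "\<And>t x. t \<in> {0..<T} \<Longrightarrow> x \<in> {a, b} \<Longrightarrow> wx t x = 0 \<or> w t x \<ge> B"
    and subsol: "\<And>t x. t \<in> {0..<T} \<Longrightarrow> x \<in> {a..b} \<Longrightarrow> wx t x = 0 \<Longrightarrow>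
      r * w t x \<ge> wt t x + s * wxx t x + r * B"
    and tx: "t \<in> {0..T}" "x \<in> {a..b}"
  shows "w t x \<ge> B"
proof -
  have "- w t x \<le> - B"
  proof (rule backward_max_principle[where w = "\<lambda>t x. - w t x" and wt = "\<lambda>t x. - wt t x"
        and wx = "\<lambda>t x. - wx t x" and wxx = "\<lambda>t x. - wxx t x" and s = s and r = r])
    have "continuous_on ({0..T} \<times> {a..b}) (\<lambda>p. - (\<lambda>(t, x). w t x) p)"
      by (intro continuous_intros cont)
    then show "continuous_on ({0..T} \<times> {a..b}) (\<lambda>(t, x). - w t x)"
      by (simp add: case_prod_beta)
  next
    fix t x assume "t \<in> {0..<T}" "x \<in> {a..b}" "- wx t x = 0"
    then show "r * - w t x \<le> - wt t x + s * - wxx t x + r * - B"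
      using subsol by force
  qed (use assms boundary terminal in \<open>auto intro!: DERIV_minus\<close>)
  then show ?thesis by simp
qed

lemma forward_min_principle:
  fixes v vt vx vxx g \<beta> :: "real \<Rightarrow> real \<Rightarrow> real"
  assumes "a < b" "0 < T" "0 \<le> s"
    and cont: "continuous_on ({0..T} \<times> {a..b}) (\<lambda>(t, x). v t x)"
    and vt: "\<And>t x. t \<in> {0..T} \<Longrightarrow> x \<in> {a..b} \<Longrightarrow> ((\<lambda>t. v t x) has_real_derivative vt t x) (at t within {0..T})"
    and vx: "\<And>t x. t \<in> {0..T} \<Longrightarrow> x \<in> {a..b} \<Longrightarrow> ((\<lambda>x. v t x) has_real_derivative vx t x) (at x within {a..b})"
    and vxx: "\<And>t x. t \<in> {0..T} \<Longrightarrow> x \<in> {a..b} \<Longrightarrow> ((\<lambda>x. vx t x) has_real_derivative vxx t x) (at x within {a..b})"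
    and initial: "\<And>x. x \<in> {a..b} \<Longrightarrow> v 0 x \<ge> 0"
    and eq: "\<And>t x. t \<in> {0<..T} \<Longrightarrow> x \<in> {a..b} \<Longrightarrow> vt t x = s * vxx t x + g t x * vx t x + \<beta> t x * v t x"
    and absorbing: "\<And>t x. t \<in> {0<..T} \<Longrightarrow> x \<in> {a..b} \<Longrightarrow> \<beta> t x < 0"
    and left: "\<And>t. t \<in> {0<..T} \<Longrightarrow> v t a < 0 \<Longrightarrow> vx t a < 0"
    and right: "\<And>t. t \<in> {0<..T} \<Longrightarrow> v t b < 0 \<Longrightarrow> vx t b > 0"
    and tx: "t \<in> {0..T}" "x \<in> {a..b}"
  shows "v t x \<ge> 0"
proof (rule ccontr)
  assume "\<not> v t x \<ge> 0"
  have "continuous_on ({0..T} \<times> {a..b}) (\<lambda>p. - (\<lambda>(t, x). v t x) p)"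
    by (intro continuous_intros cont)
  then obtain t0 x0 where p0: "t0 \<in> {0..T}" "x0 \<in> {a..b}"
    and min: "\<And>t x. t \<in> {0..T} \<Longrightarrow> x \<in> {a..b} \<Longrightarrow> v t0 x0 \<le> v t x"
    using continuous_on_rectangle_attains_sup[of 0 T a b "\<lambda>t x. - v t x"] assms(1,2)
    by (auto simp: case_prod_beta)
  have below: "v t0 x0 < 0" using min[OF tx] \<open>\<not> v t x \<ge> 0\<close> by linarith
  then have t0: "t0 \<in> {0<..T}" using initial[OF p0(2)] p0(1) by (cases "t0 = 0") auto
  have vt0: "vt t0 x0 \<le> 0"
    using min_left_deriv_nonpos[OF vt[OF p0]] t0 min[OF _ p0(2)] by auto
  consider "x0 = a" | "x0 = b" | "x0 \<in> {a<..<b}" using p0(2) by fastforce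
  then show False
  proof cases
    case 1
    then have "vx t0 x0 \<ge> 0"
      using min_right_deriv_nonneg[OF vx[OF p0]] min[OF p0(1)] \<open>a < b\<close> by auto
    then show False using left[OF t0] below 1 by auto
  next
    case 2
    then have "vx t0 x0 \<le> 0"
      using min_left_deriv_nonpos[OF vx[OF p0]] min[OF p0(1)] \<open>a < b\<close> by auto
    then show False using right[OF t0] below 2 by auto
  next
    case 3
    then have vx0: "vx t0 x0 = 0"
      using min_right_deriv_nonneg[OF vx[OF p0]] min_left_deriv_nonpos[OF vx[OF p0]] min[OF p0(1)]
      by fastforce
    have "vxx t0 x0 \<ge> 0"
      by (rule min_second_deriv_nonneg[OF \<open>a < b\<close> vx[OF p0(1)] vxx[OF p0] p0(2) vx0])
        (use min[OF p0(1)] in auto)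
    moreover have "\<beta> t0 x0 * v t0 x0 > 0"
      using absorbing[OF t0 p0(2)] below by (simp add: mult_neg_neg)
    ultimately have "vt t0 x0 > 0"
      using eq[OF t0 p0(2)] vx0 mult_nonneg_nonneg[OF \<open>0 \<le> s\<close>, of "vxx t0 x0"] by simp
    then show False using vt0 by simp
  qed
qed

lemma le_bound_of_abs_bounds:
  fixes \<beta> g p s :: real
  assumes "\<bar>\<beta>\<bar> \<le> B\<beta>" "\<bar>g\<bar> \<le> Bg" "\<bar>p\<bar> \<le> P" "s \<ge> 0"
  shows "\<beta> + s * p\<^sup>2 + g * p \<le> B\<beta> + s * P\<^sup>2 + Bg * P"
proof -
  have "p\<^sup>2 \<le> P\<^sup>2" using power_mono[OF assms(3) abs_ge_zero, of 2] by simp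
  then have "s * p\<^sup>2 \<le> s * P\<^sup>2" using assms(4) by (simp add: mult_left_mono)
  moreover have "g * p \<le> Bg * P"
  proof -
    have "\<bar>g * p\<bar> \<le> Bg * P"
      using mult_mono[OF assms(2,3)] order_trans[OF abs_ge_zero assms(2)] by (simp add: abs_mult)
    then show ?thesis by simp
  qed
  ultimately show ?thesis using assms(1) by simp
qed

lemma zero_flux_sign:
  fixes s wx g w p :: real
  assumes "s > 0" "s * wx + g * w = 0" "w < 0"
  shows "g + s * p < 0 \<Longrightarrow> wx - p * w < 0" and "g + s * p > 0 \<Longrightarrow> wx - p * w > 0"
proof -
  have eq: "s * (wx - p * w) = - (g + s * p) * w" using assms(2) by (simp add: algebra_simps)
  show "wx - p * w < 0" if "g + s * p < 0"
  proof -
    have "s * (wx - p * w) < 0" unfolding eq using that assms(3) by (simp add: mult_pos_neg)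
    then show ?thesis using assms(1) by (simp add: mult_less_0_iff)
  qed
  show "wx - p * w > 0" if "g + s * p > 0"
  proof -
    have "s * (wx - p * w) > 0" unfolding eq using that assms(3) by (simp add: mult_neg_neg)
    then show ?thesis using assms(1) by (simp add: zero_less_mult_iff)
  qed
qed

lemma zero_flux_min_principle:
  fixes w wt wx wxx g \<beta> :: "real \<Rightarrow> real \<Rightarrow> real"
  assumes "0 < L" "0 < T" "0 < s"
    and cont: "continuous_on ({0..T} \<times> {0..L}) (\<lambda>(t, x). w t x)"
    and wt: "\<And>t x. t \<in> {0..T} \<Longrightarrow> x \<in> {0..L} \<Longrightarrow> ((\<lambda>t. w t x) has_real_derivative wt t x) (at t within {0..T})"
    and wx: "\<And>t x. t \<in> {0..T} \<Longrightarrow> x \<in> {0..L} \<Longrightarrow> ((\<lambda>x. w t x) has_real_derivative wx t x) (at x within {0..L})"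
    and wxx: "\<And>t x. t \<in> {0..T} \<Longrightarrow> x \<in> {0..L} \<Longrightarrow> ((\<lambda>x. wx t x) has_real_derivative wxx t x) (at x within {0..L})"
    and initial: "\<And>x. x \<in> {0..L} \<Longrightarrow> w 0 x \<ge> 0"
    and eq: "\<And>t x. t \<in> {0<..T} \<Longrightarrow> x \<in> {0..L} \<Longrightarrow> wt t x = s * wxx t x + g t x * wx t x + \<beta> t x * w t x"
    and g_bound: "\<And>t x. t \<in> {0..T} \<Longrightarrow> x \<in> {0..L} \<Longrightarrow> \<bar>g t x\<bar> \<le> Bg"
    and \<beta>_bound: "\<And>t x. t \<in> {0..T} \<Longrightarrow> x \<in> {0..L} \<Longrightarrow> \<bar>\<beta> t x\<bar> \<le> B\<beta>"
    and flux: "\<And>t x. t \<in> {0..T} \<Longrightarrow> x \<in> {0, L} \<Longrightarrow> s * wx t x + g t x * w t x = 0"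
    and tx: "t \<in> {0..T}" "x \<in> {0..L}"
  shows "w t x \<ge> 0"
proof -
  have "Bg \<ge> 0" using g_bound[of 0 0] assms(1,2) by force
  define A where "A = Bg / (s * L) + 1"
  have "A > 0" using \<open>Bg \<ge> 0\<close> assms(1,3) by (simp add: A_def add_nonneg_pos)
  have sAL: "s * A * L > Bg" using assms(1,3) by (simp add: A_def algebra_simps)
  define p where "p y = 2 * A * (y - L / 2)" for y
  have p_bound: "\<bar>p y\<bar> \<le> A * L" if "y \<in> {0..L}" for y
    using that \<open>A > 0\<close> by (auto simp: p_def abs_le_iff algebra_simps mult_left_mono)
  define \<kappa> where "\<kappa> = s * (A * L)\<^sup>2 + 2 * s * A + B\<beta> + Bg * (A * L) + 1"
  \<comment> \<open>The weight decays in time and is Gaussian in space: it turns the zero-flux condition into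
    a strict sign condition on the derivative and the zeroth-order coefficient into a negative one.\<close>
  define \<phi> where "\<phi> t y = exp (- \<kappa> * t - A * (y - L / 2)\<^sup>2)" for t y
  define v where "v t y = \<phi> t y * w t y" for t y
  define vx where "vx t y = \<phi> t y * (wx t y - p y * w t y)" for t y
  have "0 \<le> v t x"
  proof (rule forward_min_principle[where s = s and v = v and vx = vx
        and vt = "\<lambda>t y. \<phi> t y * (wt t y - \<kappa> * w t y)"
        and vxx = "\<lambda>t y. \<phi> t y * (wxx t y - 2 * p y * wx t y + ((p y)\<^sup>2 - 2 * A) * w t y)"
        and g = "\<lambda>t y. g t y + 2 * s * p y"
        and \<beta> = "\<lambda>t y. \<beta> t y - \<kappa> + s * (p y)\<^sup>2 + 2 * s * A + g t y * p y"])
    have "continuous_on ({0..T} \<times> {0..L})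
        (\<lambda>q. exp (- \<kappa> * fst q - A * (snd q - L / 2)\<^sup>2) * (\<lambda>(t, x). w t x) q)"
      by (intro continuous_intros cont)
    then show "continuous_on ({0..T} \<times> {0..L}) (\<lambda>(t, y). v t y)"
      by (simp add: v_def \<phi>_def case_prod_beta)
  next
    fix t y assume "t \<in> {0..T}" "y \<in> {0..L}"
    then show "((\<lambda>t. v t y) has_real_derivative \<phi> t y * (wt t y - \<kappa> * w t y)) (at t within {0..T})"
      and "((\<lambda>y. v t y) has_real_derivative vx t y) (at y within {0..L})"
      and "((\<lambda>y. vx t y) has_real_derivative
          \<phi> t y * (wxx t y - 2 * p y * wx t y + ((p y)\<^sup>2 - 2 * A) * w t y)) (at y within {0..L})"
      unfolding v_def vx_def \<phi>_def p_def
      by (auto intro!: derivative_eq_intros wt wx wxx simp: algebra_simps power2_eq_square)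
  next
    fix t y assume "t \<in> {0<..T}" "y \<in> {0..L}"
    then show "\<phi> t y * (wt t y - \<kappa> * w t y) =
        s * (\<phi> t y * (wxx t y - 2 * p y * wx t y + ((p y)\<^sup>2 - 2 * A) * w t y))
        + (g t y + 2 * s * p y) * vx t y
        + (\<beta> t y - \<kappa> + s * (p y)\<^sup>2 + 2 * s * A + g t y * p y) * v t y"
      using eq[of t y] by (simp add: v_def vx_def algebra_simps power2_eq_square)
  next
    fix t y assume "t \<in> {0<..T}" "y \<in> {0..L}"
    then have "\<beta> t y + s * (p y)\<^sup>2 + g t y * p y \<le> B\<beta> + s * (A * L)\<^sup>2 + Bg * (A * L)"
      using le_bound_of_abs_bounds \<beta>_bound g_bound p_bound assms(3) by force
    then show "\<beta> t y - \<kappa> + s * (p y)\<^sup>2 + 2 * s * A + g t y * p y < 0"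
      by (simp add: \<kappa>_def)
  next
    fix t assume t: "t \<in> {0<..T}" and "v t 0 < 0"
    then have "w t 0 < 0" by (simp add: v_def \<phi>_def mult_less_0_iff)
    moreover have "g t 0 + s * p 0 < 0" using sAL g_bound[of t 0] t assms(1) by (auto simp: p_def)
    ultimately have "wx t 0 - p 0 * w t 0 < 0"
      using zero_flux_sign(1)[OF assms(3) flux[of t 0]] t by auto
    then show "vx t 0 < 0" by (simp add: vx_def \<phi>_def mult_pos_neg)
  next
    fix t assume t: "t \<in> {0<..T}" and "v t L < 0"
    then have "w t L < 0" by (simp add: v_def \<phi>_def mult_less_0_iff)
    moreover have "g t L + s * p L > 0" using sAL g_bound[of t L] t assms(1) by (auto simp: p_def)
    ultimately have "wx t L - p L * w t L > 0"
      using zero_flux_sign(2)[OF assms(3) flux[of t L]] t by auto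
    then show "vx t L > 0" by (simp add: vx_def \<phi>_def)
  qed (use assms initial in \<open>auto simp: v_def \<phi>_def\<close>)
  then show ?thesis by (simp add: v_def \<phi>_def zero_le_mult_iff)
qed

lemma C2_holder_bounded:
  assumes "C2_holder \<gamma> L f f' f''"
  obtains M where "M \<ge> 0" "\<And>x. x \<in> {0..L} \<Longrightarrow> \<bar>f x\<bar> \<le> M" "\<And>x. x \<in> {0..L} \<Longrightarrow> \<bar>f' x\<bar> \<le> M"
proof -
  have "continuous_on {0..L} f" "continuous_on {0..L} f'"
    using assms unfolding C2_holder_def continuous_on_eq_continuous_within
    by (metis DERIV_continuous)+
  then obtain M0 M1 where "\<And>x. x \<in> {0..L} \<Longrightarrow> \<bar>f x\<bar> \<le> M0" "\<And>x. x \<in> {0..L} \<Longrightarrow> \<bar>f' x\<bar> \<le> M1"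
    using continuous_on_compact_bound[OF compact_Icc] by (metis real_norm_def)
  then show ?thesis using that[of "max 0 (max M0 M1)"] by fastforce
qed

locale mfg_solution =
  fixes \<sigma> r \<epsilon> L T :: real and uT m0 :: "real \<Rightarrow> real"
    and u ut ux uxx m mt mx mxx :: "real \<Rightarrow> real \<Rightarrow> real"
  assumes classical: "classical_solution \<sigma> r \<epsilon> L T uT m0 u ut ux uxx m mt mx mxx"
    and L_pos: "L > 0" and T_pos: "T > 0" and r_pos: "r > 0" and \<epsilon>_pos: "\<epsilon> > 0" and \<sigma>_pos: "\<sigma> > 0"
    and m0_nonneg: "\<And>x. x \<in> {0..L} \<Longrightarrow> m0 x \<ge> 0" and m0_mass: "(m0 has_integral 1) {0..L}"
begin

abbreviation "\<nu> \<equiv> \<sigma>\<^sup>2 / 2"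

definition ux_mean :: "real \<Rightarrow> real" where
  "ux_mean t = integral {0..L} (\<lambda>y. ux t y * m t y)"

definition ctrl :: "real \<Rightarrow> real \<Rightarrow> real" where
  "ctrl t x = G (2 / (2 + \<epsilon>)) (\<epsilon> / (2 + \<epsilon>)) L ux m t x"

lemma ctrl_eq: "ctrl t x = (2 / (2 + \<epsilon>) + \<epsilon> / (2 + \<epsilon>) * ux_mean t - ux t x) / 2"
  by (simp add: ctrl_def G_def ux_mean_def)

lemma
  shows u_cont: "continuous_on ({0..T} \<times> {0..L}) (\<lambda>(t, x). u t x)"
    and ut_cont: "continuous_on ({0..T} \<times> {0..L}) (\<lambda>(t, x). ut t x)"
    and ux_cont: "continuous_on ({0..T} \<times> {0..L}) (\<lambda>(t, x). ux t x)"
    and uxx_cont: "continuous_on ({0..T} \<times> {0..L}) (\<lambda>(t, x). uxx t x)"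
    and m_cont: "continuous_on ({0..T} \<times> {0..L}) (\<lambda>(t, x). m t x)"
    and mt_cont: "continuous_on ({0..T} \<times> {0..L}) (\<lambda>(t, x). mt t x)"
    and mx_cont: "continuous_on ({0..T} \<times> {0..L}) (\<lambda>(t, x). mx t x)"
    and mxx_cont: "continuous_on ({0..T} \<times> {0..L}) (\<lambda>(t, x). mxx t x)"
    and hjb_interior: "\<And>t x. t \<in> {0<..<T} \<Longrightarrow> x \<in> {0<..<L} \<Longrightarrow>
      ut t x + \<nu> * uxx t x - r * u t x + (ctrl t x)\<^sup>2 = 0"
    and fp_interior: "\<And>t x. t \<in> {0<..<T} \<Longrightarrow> x \<in> {0<..<L} \<Longrightarrow>
      mt t x - \<nu> * mxx t x - deriv (\<lambda>y. ctrl t y * m t y) x = 0"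
    and initial_terminal: "\<And>x. x \<in> {0..L} \<Longrightarrow> m 0 x = m0 x \<and> u T x = uT x"
    and neumann: "\<And>t. t \<in> {0..T} \<Longrightarrow> ux t 0 = 0 \<and> ux t L = 0"
    and zero_flux: "\<And>t x. t \<in> {0..T} \<Longrightarrow> x \<in> {0, L} \<Longrightarrow> \<nu> * mx t x + ctrl t x * m t x = 0"
  using classical unfolding classical_solution_def Let_def ctrl_def[symmetric] by auto

lemma
  assumes "t \<in> {0..T}" "x \<in> {0..L}"
  shows u_deriv_t: "((\<lambda>t. u t x) has_real_derivative ut t x) (at t within {0..T})"
    and u_deriv_x: "((\<lambda>x. u t x) has_real_derivative ux t x) (at x within {0..L})"
    and ux_deriv_x: "((\<lambda>x. ux t x) has_real_derivative uxx t x) (at x within {0..L})"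
    and m_deriv_t: "((\<lambda>t. m t x) has_real_derivative mt t x) (at t within {0..T})"
    and m_deriv_x: "((\<lambda>x. m t x) has_real_derivative mx t x) (at x within {0..L})"
    and mx_deriv_x: "((\<lambda>x. mx t x) has_real_derivative mxx t x) (at x within {0..L})"
  using classical assms unfolding classical_solution_def Let_def by auto

lemma ux_mean_cont: "continuous_on {0..T} ux_mean"
proof -
  have "continuous_on ({0..T} \<times> cbox 0 L) (\<lambda>(t, x). ux t x * m t x)"
    using continuous_on_mult[OF ux_cont m_cont] by (simp add: case_prod_beta)
  then show ?thesis
    unfolding ux_mean_def using integral_continuous_on_param by fastforce
qed

lemma ctrl_cont: "continuous_on ({0..T} \<times> {0..L}) (\<lambda>(t, x). ctrl t x)"
proof -
  have "continuous_on ({0..T} \<times> {0..L}) (\<lambda>p. ux_mean (fst p))"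
    by (rule continuous_on_compose2[OF ux_mean_cont]) (auto intro!: continuous_intros)
  then have "continuous_on ({0..T} \<times> {0..L})
      (\<lambda>p. (2 / (2 + \<epsilon>) + \<epsilon> / (2 + \<epsilon>) * ux_mean (fst p) - (\<lambda>(t, x). ux t x) p) / 2)"
    by (intro continuous_intros ux_cont) auto
  then show ?thesis by (simp add: ctrl_eq case_prod_beta)
qed

lemma ctrl_deriv_x:
  "t \<in> {0..T} \<Longrightarrow> x \<in> {0..L} \<Longrightarrow> ((\<lambda>y. ctrl t y) has_real_derivative - uxx t x / 2) (at x within {0..L})"
  unfolding ctrl_eq by (auto intro!: derivative_eq_intros ux_deriv_x)

lemma hjb:
  assumes "t \<in> {0..T}" "x \<in> {0..L}"
  shows "ut t x + \<nu> * uxx t x - r * u t x + (ctrl t x)\<^sup>2 = 0"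
proof -
  have "continuous_on ({0..T} \<times> {0..L}) (\<lambda>p. (\<lambda>(t, x). ut t x) p + \<nu> * (\<lambda>(t, x). uxx t x) p
      - r * (\<lambda>(t, x). u t x) p + ((\<lambda>(t, x). ctrl t x) p)\<^sup>2)"
    by (intro continuous_intros ut_cont uxx_cont u_cont ctrl_cont)
  then show ?thesis
    using continuous_on_rectangle_zero[OF T_pos L_pos _ hjb_interior assms]
    by (simp add: case_prod_beta)
qed

lemma fokker_planck:
  assumes "t \<in> {0..T}" "x \<in> {0..L}"
  shows "mt t x = \<nu> * mxx t x + ctrl t x * mx t x + (- uxx t x / 2) * m t x"
proof -
  have "continuous_on ({0..T} \<times> {0..L}) (\<lambda>p. (\<lambda>(t, x). mt t x) p - (\<nu> * (\<lambda>(t, x). mxx t x) p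
      + (\<lambda>(t, x). ctrl t x) p * (\<lambda>(t, x). mx t x) p + (- (\<lambda>(t, x). uxx t x) p / 2) * (\<lambda>(t, x). m t x) p))"
    by (intro continuous_intros mt_cont mxx_cont uxx_cont m_cont ctrl_cont mx_cont) auto
  moreover have "mt t x - (\<nu> * mxx t x + ctrl t x * mx t x + (- uxx t x / 2) * m t x) = 0"
    if "t \<in> {0<..<T}" "x \<in> {0<..<L}" for t x
  proof -
    have "at x within {0..L} = at x" using that by (intro at_within_Icc_at) auto
    then have "((\<lambda>y. ctrl t y * m t y) has_real_derivative
        (- uxx t x / 2) * m t x + ctrl t x * mx t x) (at x)"
      using DERIV_mult[OF ctrl_deriv_x m_deriv_x, of t x] that by (simp add: algebra_simps)
    then show ?thesis using fp_interior[OF that] DERIV_imp_deriv by fastforce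
  qed
  ultimately show ?thesis
    using continuous_on_rectangle_zero[OF T_pos L_pos, of "\<lambda>t x. mt t x - (\<nu> * mxx t x
      + ctrl t x * mx t x + (- uxx t x / 2) * m t x)"] assms
    by (simp add: case_prod_beta)
qed

lemma m_nonneg:
  assumes "t \<in> {0..T}" "x \<in> {0..L}"
  shows "m t x \<ge> 0"
proof -
  have "continuous_on ({0..T} \<times> {0..L}) (\<lambda>p. - (\<lambda>(t, x). uxx t x) p / 2)"
    by (intro continuous_intros uxx_cont) auto
  then have "continuous_on ({0..T} \<times> {0..L}) (\<lambda>(t, x). - uxx t x / 2)"
    by (simp add: case_prod_beta)
  then obtain B\<beta> where B\<beta>: "\<And>t x. t \<in> {0..T} \<Longrightarrow> x \<in> {0..L} \<Longrightarrow> \<bar>- uxx t x / 2\<bar> \<le> B\<beta>"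
    using bounded_on_rectangle by blast
  obtain Bg where Bg: "\<And>t x. t \<in> {0..T} \<Longrightarrow> x \<in> {0..L} \<Longrightarrow> \<bar>ctrl t x\<bar> \<le> Bg"
    using bounded_on_rectangle[OF ctrl_cont] by blast
  show ?thesis
    by (rule zero_flux_min_principle[where w = m and wt = mt and wx = mx and wxx = mxx and s = \<nu>
          and g = ctrl and \<beta> = "\<lambda>t x. - uxx t x / 2" and Bg = Bg and B\<beta> = B\<beta>])
      (use L_pos T_pos \<sigma>_pos m_cont m_deriv_t m_deriv_x mx_deriv_x initial_terminal m0_nonneg
        fokker_planck zero_flux B\<beta> Bg assms in auto)
qed

lemma integral_mt_eq_0:
  assumes "t \<in> {0..T}"
  shows "integral {0..L} (mt t) = 0"
proof -
  have "((\<lambda>x. \<nu> * mx t x + ctrl t x * m t x) has_real_derivative mt t x) (at x within {0..L})"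
    if "x \<in> {0..L}" for x
  proof -
    have mt: "mt t x = \<nu> * mxx t x + (- uxx t x / 2 * m t x + ctrl t x * mx t x)"
      using fokker_planck[OF assms that] by simp
    show ?thesis unfolding mt
      using ctrl_deriv_x[OF assms that] m_deriv_x[OF assms that] mx_deriv_x[OF assms that]
      by (auto intro!: derivative_eq_intros)
  qed
  then have "(mt t has_integral (\<nu> * mx t L + ctrl t L * m t L) - (\<nu> * mx t 0 + ctrl t 0 * m t 0)) {0..L}"
    using fundamental_theorem_of_calculus[of 0 L "\<lambda>x. \<nu> * mx t x + ctrl t x * m t x" "mt t"] L_pos
    by (simp add: has_real_derivative_iff_has_vector_derivative)
  then show ?thesis using zero_flux[OF assms] by (simp add: integral_unique)
qed

lemma mass_conserved:
  assumes "t \<in> {0..T}"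
  shows "integral {0..L} (m t) = 1"
proof -
  have "((\<lambda>t. integral (cbox 0 L) (m t)) has_real_derivative integral (cbox 0 L) (mt s))
      (at s within {0..T})" if "s \<in> {0..T}" for s
  proof (rule leibniz_rule_field_derivative[where fx = mt])
    show "\<And>t. t \<in> {0..T} \<Longrightarrow> m t integrable_on cbox 0 L"
      using continuous_on_slice[OF m_cont] by (auto intro: integrable_continuous_interval)
  qed (use that m_deriv_t mt_cont in auto)
  then have "\<And>s. s \<in> {0..T} \<Longrightarrow>
      ((\<lambda>t. integral {0..L} (m t)) has_real_derivative 0) (at s within {0..T})"
    using integral_mt_eq_0 by fastforce
  then obtain k where "\<And>t. t \<in> {0..T} \<Longrightarrow> integral {0..L} (m t) = k"
    using has_field_derivative_zero_constant[of "{0..T}" "\<lambda>t. integral {0..L} (m t)"] by auto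
  moreover have "integral {0..L} (m 0) = 1"
    using integral_cong[of "{0..L}" "m 0" m0] initial_terminal integral_unique[OF m0_mass] by auto
  ultimately show ?thesis using assms T_pos by force
qed

lemma ux_mean_bound:
  assumes M: "\<And>t x. t \<in> {0..T} \<Longrightarrow> x \<in> {0..L} \<Longrightarrow> \<bar>ux t x\<bar> \<le> M" and t: "t \<in> {0..T}"
  shows "\<bar>ux_mean t\<bar> \<le> M"
proof -
  have "norm (integral {0..L} (\<lambda>y. ux t y * m t y)) \<le> integral {0..L} (\<lambda>y. M * m t y)"
  proof (rule integral_norm_bound_integral)
    show "(\<lambda>y. ux t y * m t y) integrable_on {0..L}" "(\<lambda>y. M * m t y) integrable_on {0..L}"
      using continuous_on_slice[OF m_cont t] continuous_on_slice[OF ux_cont t]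
      by (auto intro!: integrable_continuous_interval continuous_intros)
  next
    fix y assume "y \<in> {0..L}"
    then show "norm (ux t y * m t y) \<le> M * m t y"
      using M[OF t] m_nonneg[OF t] by (simp add: abs_mult mult_right_mono)
  qed
  also have "\<dots> = M" using mass_conserved[OF t] by simp
  finally show ?thesis by (simp add: ux_mean_def)
qed

lemma ctrl_bound:
  assumes "\<And>t x. t \<in> {0..T} \<Longrightarrow> x \<in> {0..L} \<Longrightarrow> \<bar>ux t x\<bar> \<le> M" "t \<in> {0..T}" "x \<in> {0..L}"
  shows "\<bar>ctrl t x\<bar> \<le> (2 / (2 + \<epsilon>) + \<epsilon> / (2 + \<epsilon>) * M + M) / 2"
proof -
  have "\<bar>\<epsilon> / (2 + \<epsilon>) * ux_mean t\<bar> \<le> \<epsilon> / (2 + \<epsilon>) * M"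
    using mult_left_mono[OF ux_mean_bound[OF assms(1,2)], of "\<epsilon> / (2 + \<epsilon>)"] \<epsilon>_pos
    by (simp add: abs_mult)
  moreover have "\<bar>ux t x\<bar> \<le> M" "2 / (2 + \<epsilon>) > 0" using assms \<epsilon>_pos by auto
  moreover have "\<bar>(a + p - q) / 2\<bar> \<le> (a + P + M) / 2"
    if "\<bar>p\<bar> \<le> P" "\<bar>q\<bar> \<le> M" "a > 0" for a p q P :: real
    using that by (simp add: abs_le_iff)
  ultimately show ?thesis unfolding ctrl_eq by blast
qed

lemma u_le_of_ctrl_bound:
  assumes ctrl: "\<And>t x. t \<in> {0..T} \<Longrightarrow> x \<in> {0..L} \<Longrightarrow> \<bar>ctrl t x\<bar> \<le> K"
    and "\<And>x. x \<in> {0..L} \<Longrightarrow> uT x \<le> B" "K\<^sup>2 \<le> r * B"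
    and "t \<in> {0..T}" "x \<in> {0..L}"
  shows "u t x \<le> B"
proof (rule backward_max_principle[where w = u and wt = ut and wx = ux and wxx = uxx and s = \<nu> and r = r])
  fix t x assume tx: "t \<in> {0..<T}" "x \<in> {0..L}"
  then have "(ctrl t x)\<^sup>2 \<le> K\<^sup>2"
    using power_mono[OF ctrl abs_ge_zero, of t x 2] by simp
  moreover have "ut t x + \<nu> * uxx t x - r * u t x + (ctrl t x)\<^sup>2 = 0" using hjb tx by simp
  ultimately show "r * u t x \<le> ut t x + \<nu> * uxx t x + r * B"
    using assms(3) by linarith
qed (use assms L_pos T_pos r_pos u_cont u_deriv_t u_deriv_x ux_deriv_x initial_terminal neumann in auto)

lemma u_nonneg:
  assumes "\<And>x. x \<in> {0..L} \<Longrightarrow> uT x \<ge> 0" "t \<in> {0..T}" "x \<in> {0..L}"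
  shows "u t x \<ge> 0"
proof (rule backward_min_principle[where w = u and wt = ut and wx = ux and wxx = uxx and s = \<nu> and r = r])
  fix t x assume "t \<in> {0..<T}" "x \<in> {0..L}"
  then have "ut t x + \<nu> * uxx t x - r * u t x + (ctrl t x)\<^sup>2 = 0" using hjb by simp
  then show "r * u t x \<ge> ut t x + \<nu> * uxx t x + r * 0"
    using zero_le_power2[of "ctrl t x"] by linarith
qed (use assms L_pos T_pos r_pos u_cont u_deriv_t u_deriv_x ux_deriv_x initial_terminal neumann in auto)

lemma increment_cont:
  assumes "0 < h"
  shows "continuous_on ({0..T} \<times> {0..L - h}) (\<lambda>(t, y). increment h u t y)"
proof -
  have "continuous_on ({0..T} \<times> {0..L - h})
      (\<lambda>p. (\<lambda>(t, x). u t x) (fst p, snd p + h) - (\<lambda>(t, x). u t x) (fst p, snd p))"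
    by (intro continuous_intros continuous_on_compose2[OF u_cont]) (use assms in auto)
  then show ?thesis by (simp add: increment_def case_prod_beta)
qed

\<comment> \<open>The control depends on \<open>x\<close> only through \<open>ux\<close>: at a critical point of the increment both
  endpoints carry the same control, so the quadratic terms of the two HJB equations cancel.\<close>
lemma hjb_increment_critical:
  assumes "0 < h" "t \<in> {0..T}" "y \<in> {0..L - h}" "increment h ux t y = 0"
  shows "r * increment h u t y = increment h ut t y + \<nu> * increment h uxx t y"
proof -
  have "(ctrl t (y + h))\<^sup>2 = (ctrl t y)\<^sup>2" using assms(4) by (simp add: increment_def ctrl_eq)
  moreover have "ut t (y + h) + \<nu> * uxx t (y + h) - r * u t (y + h) + (ctrl t (y + h))\<^sup>2 = 0"
    "ut t y + \<nu> * uxx t y - r * u t y + (ctrl t y)\<^sup>2 = 0"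
    using hjb assms(1-3) by auto
  ultimately show ?thesis unfolding increment_def right_diff_distrib by linarith
qed

lemma increment_bound:
  assumes h: "0 < h" "h < L"
    and terminal: "\<And>y. y \<in> {0..L - h} \<Longrightarrow> \<bar>uT (y + h) - uT y\<bar> \<le> B"
    and left_end: "\<And>t. t \<in> {0..<T} \<Longrightarrow> \<bar>u t h - u t 0\<bar> \<le> B"
    and right_end: "\<And>t. t \<in> {0..<T} \<Longrightarrow> \<bar>u t L - u t (L - h)\<bar> \<le> B"
    and ty: "t \<in> {0..T}" "y \<in> {0..L - h}"
  shows "\<bar>u t (y + h) - u t y\<bar> \<le> B"
proof -
  have "B \<ge> 0" using terminal[of 0] h by force
  have terminal': "\<And>y. y \<in> {0..L - h} \<Longrightarrow> - B \<le> increment h u T y \<and> increment h u T y \<le> B"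
    using terminal initial_terminal h by (force simp: increment_def abs_le_iff)
  have ends: "- B \<le> increment h u t y \<and> increment h u t y \<le> B" if "t \<in> {0..<T}" "y \<in> {0, L - h}" for t y
    using left_end[OF that(1)] right_end[OF that(1)] that(2) by (auto simp: increment_def abs_le_iff)
  have derivs: "((\<lambda>t. increment h u t y) has_real_derivative increment h ut t y) (at t within {0..T})"
    "((\<lambda>y. increment h u t y) has_real_derivative increment h ux t y) (at y within {0..L - h})"
    "((\<lambda>y. increment h ux t y) has_real_derivative increment h uxx t y) (at y within {0..L - h})"
    if "t \<in> {0..T}" "y \<in> {0..L - h}" for t y
  proof -
    show "((\<lambda>t. increment h u t y) has_real_derivative increment h ut t y) (at t within {0..T})"
      unfolding increment_def using that h by (intro DERIV_diff u_deriv_t) auto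
    show "((\<lambda>y. increment h u t y) has_real_derivative increment h ux t y) (at y within {0..L - h})"
      by (rule increment_deriv_x[where f = u]) (use h that u_deriv_x in auto)
    show "((\<lambda>y. increment h ux t y) has_real_derivative increment h uxx t y) (at y within {0..L - h})"
      by (rule increment_deriv_x[where f = ux]) (use h that ux_deriv_x in auto)
  qed
  have "increment h u t y \<le> B"
  proof (rule backward_max_principle[where w = "increment h u" and wt = "increment h ut"
        and wx = "increment h ux" and wxx = "increment h uxx" and s = \<nu> and r = r and a = 0 and b = "L - h"])
    show "\<And>t y. t \<in> {0..<T} \<Longrightarrow> y \<in> {0..L - h} \<Longrightarrow> increment h ux t y = 0 \<Longrightarrow>
        r * increment h u t y \<le> increment h ut t y + \<nu> * increment h uxx t y + r * B"
      using hjb_increment_critical[OF h(1)] \<open>B \<ge> 0\<close> r_pos by auto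
    show "\<And>t y. t \<in> {0..<T} \<Longrightarrow> y \<in> {0, L - h} \<Longrightarrow> increment h ux t y = 0 \<or> increment h u t y \<le> B"
      using ends by blast
  qed (use h T_pos r_pos increment_cont derivs terminal' ty in auto)
  moreover have "increment h u t y \<ge> - B"
  proof (rule backward_min_principle[where w = "increment h u" and wt = "increment h ut"
        and wx = "increment h ux" and wxx = "increment h uxx" and s = \<nu> and r = r and a = 0 and b = "L - h"])
    show "\<And>t y. t \<in> {0..<T} \<Longrightarrow> y \<in> {0..L - h} \<Longrightarrow> increment h ux t y = 0 \<Longrightarrow>
        r * increment h u t y \<ge> increment h ut t y + \<nu> * increment h uxx t y + r * - B"
      using hjb_increment_critical[OF h(1)] \<open>B \<ge> 0\<close> r_pos by auto
    show "\<And>t y. t \<in> {0..<T} \<Longrightarrow> y \<in> {0, L - h} \<Longrightarrow> increment h ux t y = 0 \<or> increment h u t y \<ge> - B"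
      using ends by blast
  qed (use h T_pos r_pos increment_cont derivs terminal' ty in auto)
  ultimately show ?thesis by (simp add: increment_def)
qed

lemma increment_close_to_ux:
  assumes "e > 0"
  obtains \<delta> where "\<delta> > 0"
    "\<And>t y z h. t \<in> {0..T} \<Longrightarrow> 0 \<le> y \<Longrightarrow> 0 < h \<Longrightarrow> h < \<delta> \<Longrightarrow> y + h \<le> L \<Longrightarrow> z \<in> {y..y + h} \<Longrightarrow>
      \<bar>u t (y + h) - u t y - ux t z * h\<bar> \<le> e * h"
proof -
  have "uniformly_continuous_on ({0..T} \<times> {0..L}) (\<lambda>(t, x). ux t x)"
    by (rule compact_uniformly_continuous[OF ux_cont]) (auto intro: compact_Times)
  then obtain \<delta> where "\<delta> > 0" and \<delta>: "\<And>p q. p \<in> {0..T} \<times> {0..L} \<Longrightarrow> q \<in> {0..T} \<times> {0..L} \<Longrightarrow>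
      dist q p < \<delta> \<Longrightarrow> dist ((\<lambda>(t, x). ux t x) q) ((\<lambda>(t, x). ux t x) p) < e"
    unfolding uniformly_continuous_on_def using assms by metis
  show ?thesis
  proof (rule that[OF \<open>\<delta> > 0\<close>])
    fix t y z h assume t: "t \<in> {0..T}" and yh: "0 \<le> y" "0 < h" "h < \<delta>" "y + h \<le> L" and z: "z \<in> {y..y + h}"
    obtain \<xi> where \<xi>: "\<xi> \<in> {y<..<y + h}" "u t (y + h) - u t y = ux t \<xi> * (y + h - y)"
      by (rule real_mvt_within[of y "y + h" "{0..L}" "u t" "ux t"]) (use t yh u_deriv_x in auto)
    have "dist (t, \<xi>) (t, z) < \<delta>"
      using \<xi>(1) z yh by (auto simp: dist_Pair_Pair dist_real_def)
    then have "\<bar>ux t \<xi> - ux t z\<bar> < e"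
      using \<delta>[of "(t, z)" "(t, \<xi>)"] t \<xi>(1) z yh by (auto simp: dist_real_def)
    then have "\<bar>ux t \<xi> - ux t z\<bar> * h \<le> e * h" using yh by simp
    then show "\<bar>u t (y + h) - u t y - ux t z * h\<bar> \<le> e * h"
      using \<xi>(2) yh by (simp add: abs_mult left_diff_distrib[symmetric])
  qed
qed

lemma ux_bound:
  assumes uT': "\<And>x. x \<in> {0..L} \<Longrightarrow> (uT has_real_derivative uT' x) (at x within {0..L})"
    and M: "\<And>x. x \<in> {0..L} \<Longrightarrow> \<bar>uT' x\<bar> \<le> M"
    and t: "t \<in> {0..T}" and x: "x \<in> {0..L}"
  shows "\<bar>ux t x\<bar> \<le> M"
proof (cases "x = L")
  case True
  then show ?thesis using neumann[OF t] M[of 0] L_pos by auto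
next
  case False
  with x have "x < L" by simp
  show ?thesis
  proof (rule field_le_epsilon)
    fix e :: real assume "e > 0"
    then obtain \<delta> where "\<delta> > 0" and \<delta>: "\<And>t y z h. t \<in> {0..T} \<Longrightarrow> 0 \<le> y \<Longrightarrow> 0 < h \<Longrightarrow> h < \<delta> \<Longrightarrow>
        y + h \<le> L \<Longrightarrow> z \<in> {y..y + h} \<Longrightarrow> \<bar>u t (y + h) - u t y - ux t z * h\<bar> \<le> e / 3 * h"
      using increment_close_to_ux[of "e / 3"] by auto
    define h where "h = min \<delta> (L - x) / 2"
    have h: "0 < h" "h < \<delta>" "x + h \<le> L" "h < L"
      using \<open>\<delta> > 0\<close> \<open>x < L\<close> x by (auto simp: h_def min_def field_simps)
    have "\<bar>u t (x + h) - u t x\<bar> \<le> (M + e / 3) * h"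
    proof (rule increment_bound)
      fix y assume y: "y \<in> {0..L - h}"
      obtain \<xi> where "\<xi> \<in> {y<..<y + h}" "uT (y + h) - uT y = uT' \<xi> * (y + h - y)"
        by (rule real_mvt_within[of y "y + h" "{0..L}" uT uT']) (use y h uT' in auto)
      then show "\<bar>uT (y + h) - uT y\<bar> \<le> (M + e / 3) * h"
        using M[of \<xi>] y h \<open>e > 0\<close> by (auto simp: abs_mult intro!: mult_right_mono)
    next
      fix s assume s: "s \<in> {0..<T}"
      have "\<bar>u s h - u s 0\<bar> \<le> e / 3 * h" "\<bar>u s L - u s (L - h)\<bar> \<le> e / 3 * h"
        using \<delta>[of s 0 h 0] \<delta>[of s "L - h" h L] neumann[of s] s h by auto
      moreover have "0 \<le> M * h" using M[of 0] L_pos h by simp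
      ultimately show "\<bar>u s h - u s 0\<bar> \<le> (M + e / 3) * h" "\<bar>u s L - u s (L - h)\<bar> \<le> (M + e / 3) * h"
        by (simp_all add: distrib_right)
    qed (use h t x in auto)
    moreover have "\<bar>u t (x + h) - u t x - ux t x * h\<bar> \<le> e / 3 * h"
      using \<delta>[of t x h x] t x h by auto
    ultimately have "\<bar>ux t x * h\<bar> \<le> (M + e / 3) * h + e / 3 * h"
      by (smt (verit))
    also have "\<dots> \<le> (M + e) * h"
      using mult_pos_pos[OF \<open>e > 0\<close> h(1)] by (simp add: field_simps)
    finally have "\<bar>ux t x\<bar> * h \<le> (M + e) * h"
      using h by (simp add: abs_mult)
    then show "\<bar>ux t x\<bar> \<le> M + e" using h by simp
  qed
qed

lemma u_bound:
  assumes "\<And>x. x \<in> {0..L} \<Longrightarrow> (uT has_real_derivative uT' x) (at x within {0..L})"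
    and "\<And>x. x \<in> {0..L} \<Longrightarrow> uT x \<ge> 0" "\<And>x. x \<in> {0..L} \<Longrightarrow> \<bar>uT x\<bar> \<le> M"
    and "\<And>x. x \<in> {0..L} \<Longrightarrow> \<bar>uT' x\<bar> \<le> M"
    and "t \<in> {0..T}" "x \<in> {0..L}"
  shows "\<bar>u t x\<bar> \<le> max M (((2 / (2 + \<epsilon>) + \<epsilon> / (2 + \<epsilon>) * M + M) / 2)\<^sup>2 / r)"
    (is "_ \<le> max M (?K\<^sup>2 / r)")
proof -
  have "u t x \<le> max M (?K\<^sup>2 / r)"
  proof (rule u_le_of_ctrl_bound[OF ctrl_bound[OF ux_bound[OF assms(1,4)]]])
    show "\<And>x. x \<in> {0..L} \<Longrightarrow> uT x \<le> max M (?K\<^sup>2 / r)"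
      using assms(3) by (force dest: abs_le_D1)
    show "?K\<^sup>2 \<le> r * max M (?K\<^sup>2 / r)"
      using mult_left_mono[of "?K\<^sup>2 / r" "max M (?K\<^sup>2 / r)" r] r_pos by simp
  qed (use assms(5,6) in auto)
  then show ?thesis using u_nonneg[OF assms(2,5,6)] by simp
qed

end

theorem lemma2p2:
  fixes L T r \<epsilon> :: real and uT m0 :: "real \<Rightarrow> real"
  assumes "L > 0" and "T > 0" and "r > 0" and "\<epsilon> > 0"
    and "\<exists>\<gamma>>0. \<exists>uT' uT''. C2_holder \<gamma> L uT uT' uT'' \<and> uT' 0 = 0 \<and> uT' L = 0"
    and "\<exists>\<gamma>>0. \<exists>m0' m0''. C2_holder \<gamma> L m0 m0' m0'' \<and>
           m0 0 = 0 \<and> m0' 0 = 0 \<and> m0 L = 0 \<and> m0' L = 0"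
    and "\<forall>x\<in>{0..L}. m0 x \<ge> 0" and "(m0 has_integral 1) {0..L}"
    and "\<forall>x\<in>{0..L}. uT x \<ge> 0"
  shows "\<exists>C>0. \<forall>\<sigma>>0. \<forall>u ut ux uxx m mt mx mxx.
           classical_solution \<sigma> r \<epsilon> L T uT m0 u ut ux uxx m mt mx mxx \<longrightarrow>
             (SUP p\<in>{0..T}\<times>{0..L}. \<bar>u (fst p) (snd p)\<bar>)
               + (SUP p\<in>{0..T}\<times>{0..L}. \<bar>ux (fst p) (snd p)\<bar>) \<le> C \<and>
             (\<forall>t\<in>{0..T}. \<bar>integral {0..L} (\<lambda>x. ux t x * m t x)\<bar> \<le> C)"
proof -
  \<comment> \<open>The compatibility conditions and the regularity of \<open>m0\<close> are only needed for the
    existence of classical solutions, not for the estimate.\<close>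
  obtain \<gamma> uT' uT'' where uT: "C2_holder \<gamma> L uT uT' uT''" using assms(5) by blast
  obtain M where "M \<ge> 0" and M: "\<And>x. x \<in> {0..L} \<Longrightarrow> \<bar>uT x\<bar> \<le> M" "\<And>x. x \<in> {0..L} \<Longrightarrow> \<bar>uT' x\<bar> \<le> M"
    using C2_holder_bounded[OF uT] by auto
  define B where "B = max M (((2 / (2 + \<epsilon>) + \<epsilon> / (2 + \<epsilon>) * M + M) / 2)\<^sup>2 / r)"
  show ?thesis
  proof (intro exI[of _ "B + M + 1"] conjI allI impI ballI)
    fix \<sigma> u ut ux uxx m mt mx mxx assume "\<sigma> > 0"
      and "classical_solution \<sigma> r \<epsilon> L T uT m0 u ut ux uxx m mt mx mxx"
    then interpret mfg_solution \<sigma> r \<epsilon> L T uT m0 u ut ux uxx m mt mx mxx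
      by unfold_locales (use assms in auto)
    have uT': "\<And>x. x \<in> {0..L} \<Longrightarrow> (uT has_real_derivative uT' x) (at x within {0..L})"
      using uT unfolding C2_holder_def by blast
    have ux: "\<And>t x. t \<in> {0..T} \<Longrightarrow> x \<in> {0..L} \<Longrightarrow> \<bar>ux t x\<bar> \<le> M"
      using ux_bound[OF uT' M(2)] by blast
    have "(SUP p\<in>{0..T}\<times>{0..L}. \<bar>u (fst p) (snd p)\<bar>) \<le> B"
      by (rule cSUP_least) (use u_bound[OF uT' _ M] assms(1,2,9) in \<open>auto simp: B_def\<close>)
    moreover have "(SUP p\<in>{0..T}\<times>{0..L}. \<bar>ux (fst p) (snd p)\<bar>) \<le> M"
      by (rule cSUP_least) (use ux assms(1,2) in auto)
    ultimately show "(SUP p\<in>{0..T}\<times>{0..L}. \<bar>u (fst p) (snd p)\<bar>)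
        + (SUP p\<in>{0..T}\<times>{0..L}. \<bar>ux (fst p) (snd p)\<bar>) \<le> B + M + 1"
      by linarith
    fix t assume "t \<in> {0..T}"
    then show "\<bar>integral {0..L} (\<lambda>x. ux t x * m t x)\<bar> \<le> B + M + 1"
      using ux_mean_bound[OF ux] \<open>M \<ge> 0\<close> unfolding ux_mean_def B_def by force
  qed (use \<open>M \<ge> 0\<close> in \<open>simp add: B_def\<close>)
qed

end
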